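(* Let $q>0$, $q\neq1$, and let $f(x)=\sum_{N=0}^\infty a_Nx^N$ be a formal power series. Then $$e^{-\frac{1}{[2]_q^2}D_x^2}f(x)=\sum_{N=0}^\infty a_N\frac{H_N(x;q)}{[2]_q^N},$$ where the left-hand side is understood termwise, i.e. as $\sum_N a_N\,e^{-\frac{1}{[2]_q^2}D_x^2}x^N$.
   Context: For $n\ge 0$ let $[n]_q=\frac{q^n-1}{q-1}$, $[0]_q!=1$, $[n]_q!=[1]_q\cdots[n]_q$, and $e_q(z)=\sum_{n\ge0}z^n/[n]_q!$. The $q$-derivative acts by $D_x x^n=[n]_qx^{n-1}$, and $e^{aD_x^2}:=\sum_{n\ge0}\frac{a^n}{n!}D_x^{2n}$. The $q$-Hermite polynomials $H_N(x;q)$ are defined by the identity of formal power series in $t$: $e^{-t^2}e_q([2]_q t x)=\sum_{N\ge0}H_N(x;q)\,t^N/[N]_q!$. *)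

theory Defs
  imports "HOL-Computational_Algebra.Computational_Algebra"
begin

definition qint :: "real \<Rightarrow> nat \<Rightarrow> real" where
  "qint q n = (q ^ n - 1) / (q - 1)"

definition qfact :: "real \<Rightarrow> nat \<Rightarrow> real" where
  "qfact q n = (\<Prod>i=1..n. qint q i)"

text \<open>The q-derivative on polynomials in x: D_x x^n = [n]_q x^(n-1).\<close>
definition qderiv :: "real \<Rightarrow> real poly \<Rightarrow> real poly" where
  "qderiv q p = Poly (map (\<lambda>i. qint q (Suc i) * coeff p (Suc i)) [0..<degree p])"

text \<open>The series is finite on polynomials: D_x^(2n) p = 0 once 2n > degree p,
  so summing over n \<le> degree p captures all terms.\<close>
definition qexpD2 :: "real \<Rightarrow> real \<Rightarrow> real poly \<Rightarrow> real poly" where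
  "qexpD2 q c p = (\<Sum>n\<le>degree p. smult (c ^ n / fact n) ((qderiv q ^^ (2 * n)) p))"

text \<open>Generating function, as a formal power series in t with polynomial (in x)
  coefficients: e^(-t^2) and e_q([2]_q t x).\<close>
definition exp_neg_t2 :: "real poly fps" where
  "exp_neg_t2 = Abs_fps (\<lambda>n. if even n then [: (-1) ^ (n div 2) / fact (n div 2) :] else 0)"

definition eq_gen :: "real \<Rightarrow> real poly fps" where
  "eq_gen q = Abs_fps (\<lambda>n. monom (qint q 2 ^ n / qfact q n) n)"

text \<open>q-Hermite polynomials: e^(-t^2) e_q([2]_q t x) = sum_N H_N(x;q) t^N/[N]_q!.\<close>
definition qhermite :: "real \<Rightarrow> nat \<Rightarrow> real poly" where
  "qhermite q N = smult (qfact q N) (fps_nth (exp_neg_t2 * eq_gen q) N)"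

end

theory Submission
  imports Defs
begin

text \<open>Both sides are explicit finite sums of monomials. Since \<open>D\<^sub>x\<^sup>k x\<^sup>N = [N]!/[N-k]! x\<^sup>N\<^sup>-\<^sup>k\<close>
  (and \<open>0\<close> for \<open>k > N\<close>), the operator sends \<open>x\<^sup>N\<close> to
  \<open>\<Sum>\<^sub>j (-1)\<^sup>j [N]! x\<^sup>N\<^sup>-\<^sup>2\<^sup>j / ([2]\<^sup>2\<^sup>j j! [N-2j]!)\<close>; expanding the Cauchy product defining \<open>H\<^sub>N\<close>
  yields exactly \<open>[2]\<^sup>N\<close> times this sum, only even powers of \<open>t\<close> in \<open>e\<^sup>-\<^sup>t\<^sup>2\<close> contributing.\<close>

lemma qint_0 [simp]: "qint q 0 = 0"
  by (simp add: qint_def)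

lemma qint_nonzero:
  assumes "q > 0" "q \<noteq> 1" "n > 0"
  shows "qint q n \<noteq> 0"
proof -
  have "q ^ n \<noteq> 1"
    using assms power_eq_1_iff[of q n] by (auto simp: abs_if)
  then show ?thesis
    using assms by (simp add: qint_def)
qed

lemma qfact_nonzero:
  assumes "q > 0" "q \<noteq> 1"
  shows "qfact q n \<noteq> 0"
  using qint_nonzero[OF assms] by (simp add: qfact_def prod_zero_iff)

lemma qfact_add:
  "qfact q (m + k) = qfact q m * (\<Prod>i<k. qint q (m + k - i))"
proof (induction k)
  case 0
  then show ?case by simp
next
  case (Suc k)
  have "qfact q (m + Suc k) = qfact q (m + k) * qint q (m + Suc k)"
    by (simp add: qfact_def)
  moreover have "(\<Prod>i<Suc k. qint q (m + Suc k - i)) = qint q (m + Suc k) * (\<Prod>i<k. qint q (m + k - i))"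
    by (subst prod.lessThan_Suc_shift) simp
  ultimately show ?case
    using Suc by simp
qed

lemma coeff_qderiv: "coeff (qderiv q p) i = qint q (Suc i) * coeff p (Suc i)"
  by (auto simp: qderiv_def nth_default_def coeff_eq_0 not_less)

lemma qderiv_monom: "qderiv q (monom a n) = monom (qint q n * a) (n - 1)"
  by (cases n) (auto intro!: poly_eqI simp: coeff_qderiv coeff_monom)

lemma funpow_qderiv_monom:
  "(qderiv q ^^ k) (monom a n) = monom (a * (\<Prod>i<k. qint q (n - i))) (n - k)"
  by (induction k) (simp_all add: qderiv_monom prod.lessThan_Suc mult_ac diff_diff_add)

lemma funpow_qderiv_monom_eq:
  assumes "q > 0" "q \<noteq> 1"
  shows "(qderiv q ^^ k) (monom a n) =
           (if k \<le> n then monom (a * qfact q n / qfact q (n - k)) (n - k) else 0)"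
proof (cases "k \<le> n")
  case True
  then have "(\<Prod>i<k. qint q (n - i)) = qfact q n / qfact q (n - k)"
    using qfact_add[of q "n - k" k] qfact_nonzero[OF assms] by simp
  then show ?thesis
    using True by (simp add: funpow_qderiv_monom)
next
  case False
  \<comment> \<open>the factor \<open>qint q (n - n) = 0\<close> occurs in the product\<close>
  then have "(\<Prod>i<k. qint q (n - i)) = 0"
    by (auto intro!: bexI[of _ n])
  then show ?thesis
    using False by (simp add: funpow_qderiv_monom)
qed

lemma sum_atMost_even:
  fixes f :: "nat \<Rightarrow> 'a::comm_monoid_add"
  assumes "\<And>i. odd i \<Longrightarrow> f i = 0"
  shows "(\<Sum>i\<le>n. f i) = (\<Sum>j\<le>n div 2. f (2 * j))"
proof -
  have "(\<Sum>j\<le>n div 2. f (2 * j)) = sum f ((*) 2 ` {..n div 2})"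
    by (simp add: sum.reindex inj_on_def)
  also have "\<dots> = (\<Sum>i\<le>n. f i)"
  proof (rule sum.mono_neutral_left)
    show "(*) 2 ` {..n div 2} \<subseteq> {..n}"
      by auto
    show "\<forall>i\<in>{..n} - (*) 2 ` {..n div 2}. f i = 0"
      using assms
      by (metis DiffE atMost_iff div_le_mono evenE image_eqI nonzero_mult_div_cancel_left
          zero_neq_numeral)
  qed simp
  finally show ?thesis ..
qed

lemma smult_sum_right: "smult c (\<Sum>i\<in>A. f i) = (\<Sum>i\<in>A. smult c (f i))"
  by (induction A rule: infinite_finite_induct) (simp_all add: smult_add_right)

lemma qexpD2_monom_one:
  assumes "q > 0" "q \<noteq> 1"
  shows "qexpD2 q c (monom 1 N) =
           (\<Sum>j\<le>N div 2. monom (c ^ j * qfact q N / (fact j * qfact q (N - 2 * j))) (N - 2 * j))"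
proof -
  have "qexpD2 q c (monom 1 N) =
          (\<Sum>j\<le>N. if 2 * j \<le> N then monom (c ^ j * qfact q N / (fact j * qfact q (N - 2 * j))) (N - 2 * j) else 0)"
    unfolding qexpD2_def degree_monom_eq[OF one_neq_zero]
    by (intro sum.cong) (simp_all add: funpow_qderiv_monom_eq[OF assms] smult_monom)
  also have "\<dots> = (\<Sum>j\<le>N div 2. monom (c ^ j * qfact q N / (fact j * qfact q (N - 2 * j))) (N - 2 * j))"
    by (rule sum.mono_neutral_cong_right) auto
  finally show ?thesis .
qed

lemma qhermite_explicit:
  "qhermite q N =
     (\<Sum>j\<le>N div 2. monom ((- 1) ^ j * qfact q N * qint q 2 ^ (N - 2 * j)
                              / (fact j * qfact q (N - 2 * j))) (N - 2 * j))"
proof -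
  have "fps_nth (exp_neg_t2 * eq_gen q) N =
          (\<Sum>i\<le>N. fps_nth exp_neg_t2 i * fps_nth (eq_gen q) (N - i))"
    by (simp add: fps_mult_nth atLeast0AtMost)
  also have "\<dots> = (\<Sum>j\<le>N div 2. fps_nth exp_neg_t2 (2 * j) * fps_nth (eq_gen q) (N - 2 * j))"
    by (rule sum_atMost_even) (simp add: exp_neg_t2_def)
  finally have cauchy_product: "fps_nth (exp_neg_t2 * eq_gen q) N =
      (\<Sum>j\<le>N div 2. fps_nth exp_neg_t2 (2 * j) * fps_nth (eq_gen q) (N - 2 * j))" .
  show ?thesis
    unfolding qhermite_def cauchy_product smult_sum_right
    by (intro sum.cong) (simp_all add: exp_neg_t2_def eq_gen_def smult_monom mult_monom)
qed

lemma qexpD2_monom_eq_qhermite: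
  assumes "q > 0" "q \<noteq> 1"
  shows "qexpD2 q (- 1 / qint q 2 ^ 2) (monom 1 N) = smult (1 / qint q 2 ^ N) (qhermite q N)"
proof -
  define w where "w = qint q 2"
  have "w \<noteq> 0"
    using qint_nonzero[OF assms] by (simp add: w_def)
  have "(- 1 / w ^ 2) ^ j = 1 / w ^ N * ((- 1) ^ j * w ^ (N - 2 * j))" if "j \<le> N div 2" for j
  proof -
    have "w ^ N = w ^ (2 * j) * w ^ (N - 2 * j)"
      using that by (simp flip: power_add)
    moreover have "(- 1 / w ^ 2) ^ j = (- 1) ^ j / w ^ (2 * j)"
      by (simp add: power_divide power_mult power_minus[of "1 / w ^ 2"])
    ultimately show ?thesis
      using \<open>w \<noteq> 0\<close> by (simp add: field_simps)
  qed
  then show ?thesis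
    unfolding qexpD2_monom_one[OF assms] qhermite_explicit smult_sum_right w_def[symmetric]
    by (intro sum.cong) (simp_all add: smult_monom)
qed

theorem mainTheorem10:
  fixes q :: real and f :: "real fps"
  assumes "q > 0" and "q \<noteq> 1"
  shows "(\<lambda>N. smult (fps_nth f N) (qexpD2 q (- 1 / (qint q 2) ^ 2) (monom 1 N)))
       = (\<lambda>N. smult (fps_nth f N / (qint q 2) ^ N) (qhermite q N))"
  unfolding qexpD2_monom_eq_qhermite[OF assms] smult_smult by simp

end
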